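(* Consider a tripartite Bell scenario in which Alice has inputs $A_1,A_2,A_3$, Bob has inputs $B_1,B_2$ and Charlie has a single input $C_1$, and every input has four outcomes labelled by bit pairs $x=(x_0,x_1)\in\{0,1\}^2$. For an observable $X$ with outcome $(x_0,x_1)$ define the $\pm1$-valued quantities $X^{10}=(-1)^{x_0}$, $X^{01}=(-1)^{x_1}$, $X^{11}=(-1)^{x_0\oplus x_1}$, and write $\langle X^{ij}Y^{kl}\rangle$ for the expectation of $X^{ij}Y^{kl}$ when $X$ and $Y$ are measured jointly by different parties. Define $$\mathcal{I}=\langle A_1^{10}B_1^{10}\rangle+\langle A_1^{01}B_2^{10}\rangle+\langle A_1^{11}C_1^{10}\rangle+\langle A_2^{10}B_1^{01}\rangle+\langle A_2^{01}B_2^{01}\rangle+\langle A_2^{11}C_1^{01}\rangle+\langle A_3^{10}B_1^{11}\rangle+\langle A_3^{01}B_2^{11}\rangle-\langle A_3^{11}C_1^{11}\rangle .$$ Then: (i) the Alice–Bob part of $\mathcal{I}$ (the six terms involving $B_1,B_2$) attains its maximal value $6$ in a local deterministic model, and the Alice–Charlie part (the three terms involving $C_1$) attains its maximal value $3$ in a local deterministic model; (ii) every local hidden variable model satisfies $\mathcal{I}\le 7$; (iii) there exists a no-signaling behaviour $P(a,b,c\mid A_k,B_l,C_1)$ for which $\mathcal{I}=9$.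
   Context: A local hidden variable model is a convex mixture of deterministic assignments of an outcome to each of the inputs $A_1,A_2,A_3,B_1,B_2,C_1$. A no-signaling behaviour is a family of distributions $P(a,b,c\mid A_k,B_l,C_1)$, $k\in\{1,2,3\}$, $l\in\{1,2\}$, such that the marginal distribution of any subset of the parties does not depend on the inputs of the remaining parties. *)

theory Defs
  imports Complex_Main
begin

text \<open>Outcomes are bit pairs (x0, x1) :: bool \<times> bool (True = 1).
  Alice's inputs A_1,A_2,A_3 are indexed by k \<in> {1,2,3}, Bob's inputs B_1,B_2 by
  l \<in> {1,2}; Charlie has the single input C_1, which is left implicit.
  A behaviour is P k l a b c = P(a,b,c | A_k, B_l, C_1).\<close>

type_synonym outcome = "bool \<times> bool"
type_synonym behaviour = "nat \<Rightarrow> nat \<Rightarrow> outcome \<Rightarrow> outcome \<Rightarrow> outcome \<Rightarrow> real"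

definition sgn10 :: "outcome \<Rightarrow> real" where
  "sgn10 x = (if fst x then -1 else 1)"
definition sgn01 :: "outcome \<Rightarrow> real" where
  "sgn01 x = (if snd x then -1 else 1)"
definition sgn11 :: "outcome \<Rightarrow> real" where
  "sgn11 x = (if fst x \<noteq> snd x then -1 else 1)"

definition is_behaviour :: "behaviour \<Rightarrow> bool" where
  "is_behaviour P \<longleftrightarrow>
     (\<forall>k\<in>{1,2,3}. \<forall>l\<in>{1,2}.
        (\<forall>a b c. P k l a b c \<ge> 0) \<and> (\<Sum>a\<in>UNIV. \<Sum>b\<in>UNIV. \<Sum>c\<in>UNIV. P k l a b c) = 1)"

definition no_signaling :: "behaviour \<Rightarrow> bool" where
  "no_signaling P \<longleftrightarrow>
     \<comment> \<open>Alice alone: independent of Bob's input\<close>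
     (\<forall>k\<in>{1,2,3}. \<forall>l\<in>{1,2}. \<forall>l'\<in>{1,2}. \<forall>a.
        (\<Sum>b\<in>UNIV. \<Sum>c\<in>UNIV. P k l a b c) = (\<Sum>b\<in>UNIV. \<Sum>c\<in>UNIV. P k l' a b c)) \<and>
     \<comment> \<open>Bob alone: independent of Alice's input\<close>
     (\<forall>k\<in>{1,2,3}. \<forall>k'\<in>{1,2,3}. \<forall>l\<in>{1,2}. \<forall>b.
        (\<Sum>a\<in>UNIV. \<Sum>c\<in>UNIV. P k l a b c) = (\<Sum>a\<in>UNIV. \<Sum>c\<in>UNIV. P k' l a b c)) \<and>
     \<comment> \<open>Charlie alone: independent of Alice's and Bob's inputs\<close>
     (\<forall>k\<in>{1,2,3}. \<forall>k'\<in>{1,2,3}. \<forall>l\<in>{1,2}. \<forall>l'\<in>{1,2}. \<forall>c.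
        (\<Sum>a\<in>UNIV. \<Sum>b\<in>UNIV. P k l a b c) = (\<Sum>a\<in>UNIV. \<Sum>b\<in>UNIV. P k' l' a b c)) \<and>
     \<comment> \<open>Alice and Charlie: independent of Bob's input\<close>
     (\<forall>k\<in>{1,2,3}. \<forall>l\<in>{1,2}. \<forall>l'\<in>{1,2}. \<forall>a c.
        (\<Sum>b\<in>UNIV. P k l a b c) = (\<Sum>b\<in>UNIV. P k l' a b c)) \<and>
     \<comment> \<open>Bob and Charlie: independent of Alice's input\<close>
     (\<forall>k\<in>{1,2,3}. \<forall>k'\<in>{1,2,3}. \<forall>l\<in>{1,2}. \<forall>b c.
        (\<Sum>a\<in>UNIV. P k l a b c) = (\<Sum>a\<in>UNIV. P k' l a b c))"

definition det_behaviour ::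
  "(nat \<Rightarrow> outcome) \<Rightarrow> (nat \<Rightarrow> outcome) \<Rightarrow> outcome \<Rightarrow> behaviour" where
  "det_behaviour fa fb fc = (\<lambda>k l a b c. if fa k = a \<and> fb l = b \<and> fc = c then 1 else 0)"

definition is_lhv :: "behaviour \<Rightarrow> bool" where
  "is_lhv P \<longleftrightarrow>
     (\<exists>(S :: ((nat \<Rightarrow> outcome) \<times> (nat \<Rightarrow> outcome) \<times> outcome) set) w.
        finite S \<and> (\<forall>s\<in>S. w s \<ge> (0::real)) \<and> sum w S = 1 \<and>
        (\<forall>k\<in>{1,2,3}. \<forall>l\<in>{1,2}. \<forall>a b c.
           P k l a b c = (\<Sum>s\<in>S. w s * det_behaviour (fst s) (fst (snd s)) (snd (snd s)) k l a b c)))"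

text \<open>Correlators. For the Alice--Charlie correlator Bob's input is fixed to B_1;
  under no-signaling this choice is irrelevant.\<close>
definition corrAB :: "behaviour \<Rightarrow> nat \<Rightarrow> nat \<Rightarrow> (outcome \<Rightarrow> real) \<Rightarrow> (outcome \<Rightarrow> real) \<Rightarrow> real" where
  "corrAB P k l f g = (\<Sum>a\<in>UNIV. \<Sum>b\<in>UNIV. \<Sum>c\<in>UNIV. P k l a b c * f a * g b)"

definition corrAC :: "behaviour \<Rightarrow> nat \<Rightarrow> (outcome \<Rightarrow> real) \<Rightarrow> (outcome \<Rightarrow> real) \<Rightarrow> real" where
  "corrAC P k f g = (\<Sum>a\<in>UNIV. \<Sum>b\<in>UNIV. \<Sum>c\<in>UNIV. P k 1 a b c * f a * g c)"

definition I_AB :: "behaviour \<Rightarrow> real" where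
  "I_AB P = corrAB P 1 1 sgn10 sgn10 + corrAB P 1 2 sgn01 sgn10
          + corrAB P 2 1 sgn10 sgn01 + corrAB P 2 2 sgn01 sgn01
          + corrAB P 3 1 sgn10 sgn11 + corrAB P 3 2 sgn01 sgn11"

definition I_AC :: "behaviour \<Rightarrow> real" where
  "I_AC P = corrAC P 1 sgn11 sgn10 + corrAC P 2 sgn11 sgn01 - corrAC P 3 sgn11 sgn11"

definition I_total :: "behaviour \<Rightarrow> real" where
  "I_total P = I_AB P + I_AC P"

end

theory Submission imports Defs begin

text \<open>
  A deterministic assignment turns each of the nine terms of \<open>\<I>\<close> into a product of
  two signs. Since \<open>X\<^sup>1\<^sup>1 = X\<^sup>1\<^sup>0 X\<^sup>0\<^sup>1\<close>, every sign of every input occurs exactly twice in the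
  product of the nine terms, so that product is \<open>-1\<close> because of the one minus sign in \<open>\<I>\<close>:
  some term equals \<open>-1\<close>, whence \<open>\<I> \<le> 7\<close>, and the bound passes to convex mixtures.
  No-signaling correlations are not bound by this parity obstruction, and a box of
  perfect (anti-)correlations reaches \<open>9\<close>.
\<close>

lemma UNIV_outcome: "(UNIV :: outcome set) = {(False,False), (False,True), (True,False), (True,True)}"
  by (auto simp: UNIV_bool)

lemma abs_sgn10 [simp]: "\<bar>sgn10 x\<bar> = 1"
  and abs_sgn01 [simp]: "\<bar>sgn01 x\<bar> = 1"
  and abs_sgn11 [simp]: "\<bar>sgn11 x\<bar> = 1"
  by (simp_all add: sgn10_def sgn01_def sgn11_def)

lemma sgn10_square [simp]: "sgn10 x * sgn10 x = 1"
  and sgn01_square [simp]: "sgn01 x * sgn01 x = 1"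
  by (simp_all add: sgn10_def sgn01_def)

lemma sgn11_eq_sgn10_mult_sgn01: "sgn11 x = sgn10 x * sgn01 x"
  by (simp add: sgn10_def sgn01_def sgn11_def)

lemma sum_list_le_length:
  fixes xs :: "real list"
  assumes "\<forall>x\<in>set xs. \<bar>x\<bar> = 1"
  shows "sum_list xs \<le> length xs"
  using assms by (induction xs) auto

lemma sum_list_le_length_minus_2_if_prod_list_eq_neg_1:
  fixes xs :: "real list"
  assumes "\<forall>x\<in>set xs. \<bar>x\<bar> = 1" and "prod_list xs = -1"
  shows "sum_list xs \<le> real (length xs) - 2"
  using assms
proof (induction xs)
  case (Cons x xs)
  show ?case
  proof (cases "x = 1")
    case True
    with Cons show ?thesis by simp
  next
    case False
    with Cons.prems have "x = -1" by (auto simp: abs_if split: if_splits)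
    with sum_list_le_length[of xs] Cons.prems show ?thesis by simp
  qed
qed simp

lemma sum_delta3:
  fixes F :: "'a::finite \<Rightarrow> 'b::finite \<Rightarrow> 'c::finite \<Rightarrow> real"
  shows "(\<Sum>a\<in>UNIV. \<Sum>b\<in>UNIV. \<Sum>c\<in>UNIV. (if x = a \<and> y = b \<and> z = c then 1 else 0) * F a b c)
    = F x y z"
  by (simp add: of_bool_def[symmetric] of_bool_conj sum_distrib_left[symmetric] mult.assoc
      del: of_bool_eq)

lemma corrAB_det_behaviour: "corrAB (det_behaviour fa fb fc) k l f g = f (fa k) * g (fb l)"
  unfolding corrAB_def det_behaviour_def using sum_delta3 by (simp add: mult.assoc)

lemma corrAC_det_behaviour: "corrAC (det_behaviour fa fb fc) k f g = f (fa k) * g fc"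
  unfolding corrAC_def det_behaviour_def using sum_delta3 by (simp add: mult.assoc)

lemma corrAB_mixture:
  assumes "\<And>a b c. P k l a b c = (\<Sum>s\<in>S. w s * D s k l a b c)"
  shows "corrAB P k l f g = (\<Sum>s\<in>S. w s * corrAB (D s) k l f g)"
  unfolding corrAB_def assms sum_distrib_left sum_distrib_right
  by (subst (3) sum.swap, subst (2) sum.swap, subst sum.swap) (simp add: mult.assoc)

lemma corrAC_mixture:
  assumes "\<And>a b c. P k 1 a b c = (\<Sum>s\<in>S. w s * D s k 1 a b c)"
  shows "corrAC P k f g = (\<Sum>s\<in>S. w s * corrAC (D s) k f g)"
  unfolding corrAC_def assms sum_distrib_left sum_distrib_right
  by (subst (3) sum.swap, subst (2) sum.swap, subst sum.swap) (simp add: mult.assoc)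

lemma I_total_mixture:
  assumes "\<forall>k\<in>{1,2,3}. \<forall>l\<in>{1,2}. \<forall>a b c. P k l a b c = (\<Sum>s\<in>S. w s * D s k l a b c)"
  shows "I_total P = (\<Sum>s\<in>S. w s * I_total (D s))"
proof -
  have AB: "corrAB P k l f g = (\<Sum>s\<in>S. w s * corrAB (D s) k l f g)"
    if "k \<in> {1,2,3}" "l \<in> {1,2}" for k l f g
    using assms that by (intro corrAB_mixture) blast
  have AC: "corrAC P k f g = (\<Sum>s\<in>S. w s * corrAC (D s) k f g)" if "k \<in> {1,2,3}" for k f g
    using assms that by (intro corrAC_mixture) blast
  show ?thesis
    unfolding I_total_def I_AB_def I_AC_def
    by (simp add: AB AC algebra_simps sum.distrib sum_subtractf)
qed

lemma I_AB_det_behaviour: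
  "I_AB (det_behaviour fa fb fc) = sum_list
     [sgn10 (fa 1) * sgn10 (fb 1), sgn01 (fa 1) * sgn10 (fb 2),
      sgn10 (fa 2) * sgn01 (fb 1), sgn01 (fa 2) * sgn01 (fb 2),
      sgn10 (fa 3) * sgn11 (fb 1), sgn01 (fa 3) * sgn11 (fb 2)]"
  by (simp add: I_AB_def corrAB_det_behaviour)

lemma I_AC_det_behaviour:
  "I_AC (det_behaviour fa fb fc) = sum_list
     [sgn11 (fa 1) * sgn10 fc, sgn11 (fa 2) * sgn01 fc, - (sgn11 (fa 3) * sgn11 fc)]"
  by (simp add: I_AC_def corrAC_det_behaviour)

lemma I_AB_det_behaviour_le: "I_AB (det_behaviour fa fb fc) \<le> 6"
  unfolding I_AB_det_behaviour
  by (rule order.trans[OF sum_list_le_length]) (simp_all add: abs_mult)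

lemma I_AC_det_behaviour_le: "I_AC (det_behaviour fa fb fc) \<le> 3"
  unfolding I_AC_det_behaviour
  by (rule order.trans[OF sum_list_le_length]) (simp_all add: abs_mult)

lemma prod_list_Bell_signs:
  "prod_list
     [sgn10 a1 * sgn10 b1, sgn01 a1 * sgn10 b2, sgn10 a2 * sgn01 b1, sgn01 a2 * sgn01 b2,
      sgn10 a3 * sgn11 b1, sgn01 a3 * sgn11 b2,
      sgn11 a1 * sgn10 c, sgn11 a2 * sgn01 c, - (sgn11 a3 * sgn11 c)] = -1"
proof -
  have "prod_list
     [sgn10 a1 * sgn10 b1, sgn01 a1 * sgn10 b2, sgn10 a2 * sgn01 b1, sgn01 a2 * sgn01 b2,
      sgn10 a3 * sgn11 b1, sgn01 a3 * sgn11 b2,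
      sgn11 a1 * sgn10 c, sgn11 a2 * sgn01 c, - (sgn11 a3 * sgn11 c)]
    = - ((sgn10 a1 * sgn10 a1) * (sgn01 a1 * sgn01 a1) * (sgn10 a2 * sgn10 a2)
       * (sgn01 a2 * sgn01 a2) * (sgn10 a3 * sgn10 a3) * (sgn01 a3 * sgn01 a3)
       * (sgn10 b1 * sgn10 b1) * (sgn01 b1 * sgn01 b1) * (sgn10 b2 * sgn10 b2)
       * (sgn01 b2 * sgn01 b2) * (sgn10 c * sgn10 c) * (sgn01 c * sgn01 c))"
    unfolding sgn11_eq_sgn10_mult_sgn01
    by (simp add: algebra_simps del: sgn10_square sgn01_square)
  then show ?thesis by simp
qed

lemma I_total_det_behaviour_le: "I_total (det_behaviour fa fb fc) \<le> 7"
proof -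
  let ?signs =
    "[sgn10 (fa 1) * sgn10 (fb 1), sgn01 (fa 1) * sgn10 (fb 2),
      sgn10 (fa 2) * sgn01 (fb 1), sgn01 (fa 2) * sgn01 (fb 2),
      sgn10 (fa 3) * sgn11 (fb 1), sgn01 (fa 3) * sgn11 (fb 2),
      sgn11 (fa 1) * sgn10 fc, sgn11 (fa 2) * sgn01 fc, - (sgn11 (fa 3) * sgn11 fc)]"
  have "I_total (det_behaviour fa fb fc) = sum_list ?signs"
    by (simp add: I_total_def I_AB_det_behaviour I_AC_det_behaviour)
  also have "\<dots> \<le> real (length ?signs) - 2"
    by (rule sum_list_le_length_minus_2_if_prod_list_eq_neg_1)
       (simp add: abs_mult, rule prod_list_Bell_signs)
  finally show ?thesis by simp
qed

lemma I_total_le_7_if_is_lhv: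
  assumes "is_lhv P"
  shows "I_total P \<le> 7"
proof -
  obtain S w where w_nonneg: "\<forall>s\<in>S. w s \<ge> 0" and w_sum: "sum w S = 1"
    and mixture: "\<forall>k\<in>{1,2,3}. \<forall>l\<in>{1,2}. \<forall>a b c. P k l a b c =
      (\<Sum>s\<in>S. w s * det_behaviour (fst s) (fst (snd s)) (snd (snd s)) k l a b c)"
    using assms unfolding is_lhv_def by blast
  have "I_total P = (\<Sum>s\<in>S. w s * I_total (det_behaviour (fst s) (fst (snd s)) (snd (snd s))))"
    using mixture by (rule I_total_mixture)
  also have "\<dots> \<le> (\<Sum>s\<in>S. w s * 7)"
    using w_nonneg I_total_det_behaviour_le by (intro sum_mono mult_left_mono) auto
  also have "\<dots> = 7"
    using w_sum by (simp add: sum_distrib_right[symmetric])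
  finally show ?thesis .
qed

definition outcome_bit :: "nat \<Rightarrow> outcome \<Rightarrow> bool" where
  "outcome_bit k x = (if k = 1 then fst x else if k = 2 then snd x else fst x \<noteq> snd x)"

text \<open>
  Alice's outcome is uniform; Bob's outcome for \<open>B\<^sub>l\<close> is constrained only in the bit read
  by \<open>A\<^sub>k\<close> (which must equal the bit of Alice's outcome read by \<open>B\<^sub>l\<close>), and Charlie's outcome
  only in the bit read by \<open>A\<^sub>k\<close>, which must be the parity of Alice's outcome, flipped for
  \<open>k = 3\<close>. This leaves \<open>4 \<cdot> 2 \<cdot> 2 = 16\<close> equally likely outcome triples, and each of the nine
  terms of \<open>\<I>\<close> equals \<open>1\<close>.
\<close>
definition ns_box :: behaviour where
  "ns_box k l a b c =
     (if outcome_bit k b = outcome_bit l a \<and> outcome_bit k c = (outcome_bit 3 a \<noteq> (k = 3))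
      then 1/16 else 0)"

lemma is_behaviour_ns_box: "is_behaviour ns_box"
  unfolding is_behaviour_def ns_box_def outcome_bit_def by (simp add: UNIV_outcome)

lemma no_signaling_ns_box: "no_signaling ns_box"
  unfolding no_signaling_def ns_box_def outcome_bit_def
  by (simp add: UNIV_outcome split_paired_All all_bool_eq)

lemma I_total_ns_box: "I_total ns_box = 9"
  unfolding I_total_def I_AB_def I_AC_def corrAB_def corrAC_def ns_box_def outcome_bit_def
  by (simp add: UNIV_outcome sgn10_def sgn01_def sgn11_def)

theorem mainTheorem2:
  shows "((\<forall>fa fb fc. I_AB (det_behaviour fa fb fc) \<le> 6) \<and>
          (\<exists>fa fb fc. I_AB (det_behaviour fa fb fc) = 6) \<and>
          (\<forall>fa fb fc. I_AC (det_behaviour fa fb fc) \<le> 3) \<and>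
          (\<exists>fa fb fc. I_AC (det_behaviour fa fb fc) = 3))
       \<and> (\<forall>P. is_lhv P \<longrightarrow> I_total P \<le> 7)
       \<and> (\<exists>P. is_behaviour P \<and> no_signaling P \<and> I_total P = 9)"
proof (intro conjI allI impI)
  show "\<exists>fa fb fc. I_AB (det_behaviour fa fb fc) = 6"
    by (intro exI[of _ "\<lambda>_. (False, False)"] exI[of _ "(False, False)"])
       (simp add: I_AB_det_behaviour sgn10_def sgn01_def sgn11_def)
  show "\<exists>fa fb fc. I_AC (det_behaviour fa fb fc) = 3"
    by (intro exI[of _ "\<lambda>k. if k = 3 then (True, False) else (False, False)"]
        exI[of _ "\<lambda>_. (False, False)"] exI[of _ "(False, False)"])
       (simp add: I_AC_det_behaviour sgn10_def sgn01_def sgn11_def)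
  show "\<exists>P. is_behaviour P \<and> no_signaling P \<and> I_total P = 9"
    using is_behaviour_ns_box no_signaling_ns_box I_total_ns_box by blast
qed (simp_all add: I_AB_det_behaviour_le I_AC_det_behaviour_le I_total_le_7_if_is_lhv)

end
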